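(* Let $\Lambda=\{0,1,3\}\subset\mathbb{Z}$ and let $\mu_\Lambda$ be the probability measure on $\{0,1\}^\Lambda$ giving probability $1/2$ to each of the configurations $(\eta_0,\eta_1,\eta_3)=(1,1,0)$ and $(\eta_0,\eta_1,\eta_3)=(0,0,1)$. Then $\mu_\Lambda$ is LTI, but there is no LTI probability measure on $\{0,1\}^{\{0,1,2,3\}}$ with marginal $\mu_\Lambda$ on $\{0,1\}^\Lambda$; in particular there is no translation invariant probability measure on $\{0,1\}^{\mathbb{Z}}$ with marginal $\mu_\Lambda$.
   Context: A probability measure $\mu_\Lambda$ on $\{0,1\}^\Lambda$, $\Lambda\subset\mathbb{Z}^d$, is LTI if for all subsets $A,A'\subset\Lambda$ with $A'$ a translate of $A$, the marginal on $\{0,1\}^{A'}$ is the translate of the marginal on $\{0,1\}^A$. *)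

theory Defs
  imports "HOL-Probability.Probability"
begin

text \<open>Configurations on a window \<Lambda> \<subseteq> Z are encoded as functions int \<Rightarrow> bool that are False
  outside \<Lambda> (True = 1, False = 0).  A probability measure on {0,1}^\<Lambda> is a pmf supported
  on such configurations.\<close>

definition confs :: "int set \<Rightarrow> (int \<Rightarrow> bool) set" where
  "confs \<Lambda> = {\<eta>. \<forall>i. i \<notin> \<Lambda> \<longrightarrow> \<not> \<eta> i}"

definition measure_on :: "int set \<Rightarrow> (int \<Rightarrow> bool) pmf \<Rightarrow> bool" where
  "measure_on \<Lambda> \<mu> \<longleftrightarrow> set_pmf \<mu> \<subseteq> confs \<Lambda>"

definition restr :: "int set \<Rightarrow> (int \<Rightarrow> bool) \<Rightarrow> (int \<Rightarrow> bool)" where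
  "restr A \<eta> = (\<lambda>i. i \<in> A \<and> \<eta> i)"

definition marg :: "int set \<Rightarrow> (int \<Rightarrow> bool) pmf \<Rightarrow> (int \<Rightarrow> bool) pmf" where
  "marg A \<mu> = map_pmf (restr A) \<mu>"

definition shift :: "int \<Rightarrow> (int \<Rightarrow> bool) \<Rightarrow> (int \<Rightarrow> bool)" where
  "shift k \<eta> = (\<lambda>i. \<eta> (i - k))"

definition LTI :: "int set \<Rightarrow> (int \<Rightarrow> bool) pmf \<Rightarrow> bool" where
  "LTI \<Lambda> \<mu> \<longleftrightarrow> (\<forall>A A' k. A \<subseteq> \<Lambda> \<longrightarrow> A' \<subseteq> \<Lambda> \<longrightarrow> A' = (\<lambda>i. i + k) ` A \<longrightarrow>
      marg A' \<mu> = map_pmf (shift k) (marg A \<mu>))"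

definition muL :: "(int \<Rightarrow> bool) pmf" where
  "muL = pmf_of_set {(\<lambda>i. i = 0 \<or> i = 1), (\<lambda>i. i = 3)}"

definition prodZ :: "(int \<Rightarrow> bool) measure" where
  "prodZ = PiM UNIV (\<lambda>_. count_space UNIV)"

end

theory Submission imports Defs begin

text \<open>All single-site marginals of \<open>muL\<close> are fair coins, and the differences of \<open>{0,1,3}\<close> are
  pairwise distinct, so only single sites are ever compared by translation: \<open>muL\<close> is LTI.
  But \<open>muL\<close> sees \<open>\<eta>\<^sub>0 = \<eta>\<^sub>1\<close> and \<open>\<eta>\<^sub>0 \<noteq> \<eta>\<^sub>3\<close> almost surely. Any translation invariant extension to
  \<open>{0,1,2,3}\<close> (or to \<open>\<int>\<close>) transports \<open>\<eta>\<^sub>0 = \<eta>\<^sub>1\<close> to \<open>\<eta>\<^sub>1 = \<eta>\<^sub>2\<close> and \<open>\<eta>\<^sub>2 = \<eta>\<^sub>3\<close>, forcing \<open>\<eta>\<^sub>0 = \<eta>\<^sub>3\<close>.\<close>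

lemma set_pmf_marg: "set_pmf (marg A \<mu>) = restr A ` set_pmf \<mu>"
  by (simp add: marg_def)

lemma marg_empty: "marg {} \<mu> = return_pmf (\<lambda>_. False)"
proof -
  have "restr {} = (\<lambda>_ _. False)" by (simp add: restr_def fun_eq_iff)
  then show ?thesis by (simp add: marg_def)
qed

lemma marg_singleton: "marg {a} \<mu> = map_pmf (\<lambda>b i. i = a \<and> b) (map_pmf (\<lambda>\<eta>. \<eta> a) \<mu>)"
  by (auto simp: marg_def restr_def pmf.map_comp o_def intro!: pmf.map_cong)

lemma shift_marg_singleton:
  "map_pmf (shift k) (marg {a} \<mu>) = map_pmf (\<lambda>b i. i = a + k \<and> b) (map_pmf (\<lambda>\<eta>. \<eta> a) \<mu>)"
  by (auto simp: marg_singleton shift_def pmf.map_comp o_def fun_eq_iff intro!: pmf.map_cong)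

lemma LTI_support_translate:
  assumes "LTI \<Lambda> \<nu>" "A \<subseteq> \<Lambda>" "(\<lambda>i. i + k) ` A \<subseteq> \<Lambda>" "\<eta> \<in> set_pmf \<nu>"
  obtains \<eta>' where "\<eta>' \<in> set_pmf \<nu>" "\<And>i. i \<in> A \<Longrightarrow> \<eta> (i + k) = \<eta>' i"
proof -
  have "marg ((\<lambda>i. i + k) ` A) \<nu> = map_pmf (shift k) (marg A \<nu>)"
    using assms(1-3) unfolding LTI_def by blast
  then have "restr ((\<lambda>i. i + k) ` A) \<eta> \<in> shift k ` restr A ` set_pmf \<nu>"
    using assms(4) by (metis imageI pmf.set_map set_pmf_marg)
  then obtain \<eta>' where "\<eta>' \<in> set_pmf \<nu>" and \<eta>': "restr ((\<lambda>i. i + k) ` A) \<eta> = shift k (restr A \<eta>')"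
    by blast
  moreover have "\<eta> (i + k) = \<eta>' i" if "i \<in> A" for i
    using fun_cong[OF \<eta>', of "i + k"] that by (simp add: restr_def shift_def)
  ultimately show thesis using that by blast
qed

lemma set_pmf_muL: "set_pmf muL = {(\<lambda>i. i = 0 \<or> i = 1), (\<lambda>i. i = 3)}"
  by (simp add: muL_def)

lemma measure_on_muL: "measure_on {0, 1, 3} muL"
  by (auto simp: measure_on_def confs_def set_pmf_muL)

lemma muL_support: "\<eta> \<in> set_pmf muL \<Longrightarrow> \<eta> 0 = \<eta> 1 \<and> \<eta> 0 \<noteq> \<eta> 3"
  by (auto simp: set_pmf_muL)

lemma site_law_muL:
  assumes "a \<in> {0, 1, 3}"
  shows "map_pmf (\<lambda>\<eta>. \<eta> a) muL = pmf_of_set UNIV"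
proof -
  have "inj_on (\<lambda>\<eta>. \<eta> a) {(\<lambda>i. i = 0 \<or> i = 1), (\<lambda>i. i = 3)}"
    using assms by (auto simp: inj_on_def)
  moreover have "(\<lambda>\<eta>. \<eta> a) ` {(\<lambda>i. i = 0 \<or> i = 1), (\<lambda>i. i = 3)} = UNIV"
    using assms by auto
  ultimately show ?thesis
    unfolding muL_def by (subst map_pmf_of_set_inj) auto
qed

text \<open>The differences of \<open>{0,1,3}\<close> are pairwise distinct (a Golomb ruler).\<close>

lemma translate_within_0_1_3:
  fixes A :: "int set"
  assumes "A \<subseteq> {0, 1, 3}" "(\<lambda>i. i + k) ` A \<subseteq> {0, 1, 3}" "k \<noteq> 0"
  shows "A = {} \<or> (\<exists>a. A = {a})"
proof (rule ccontr)
  assume "\<not> ?thesis"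
  then obtain a b where "a \<in> A" "b \<in> A" "a \<noteq> b" by blast
  with assms have "a \<in> {0, 1, 3}" "b \<in> {0, 1, 3}" "a + k \<in> {0, 1, 3}" "b + k \<in> {0, 1, 3}"
    by blast+
  with \<open>a \<noteq> b\<close> \<open>k \<noteq> 0\<close> show False
    by (simp only: insert_iff empty_iff) presburger
qed

lemma LTI_muL: "LTI {0, 1, 3} muL"
  unfolding LTI_def
proof (intro allI impI)
  fix A A' :: "int set" and k :: int
  assume A: "A \<subseteq> {0, 1, 3}" and A': "A' \<subseteq> {0, 1, 3}" and A'_def: "A' = (\<lambda>i. i + k) ` A"
  show "marg A' muL = map_pmf (shift k) (marg A muL)"
  proof (cases "k = 0")
    case True
    then have "shift k = id" by (simp add: shift_def fun_eq_iff)
    with True show ?thesis by (simp add: A'_def)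
  next
    case False
    with A A' A'_def consider "A = {}" | a where "A = {a}"
      using translate_within_0_1_3 by blast
    then show ?thesis
    proof cases
      case 1
      then show ?thesis by (simp add: A'_def marg_empty shift_def)
    next
      case (2 a)
      with A A' A'_def have "a \<in> {0, 1, 3}" "a + k \<in> {0, 1, 3}" by auto
      then have "marg {a + k} muL = map_pmf (shift k) (marg {a} muL)"
        unfolding shift_marg_singleton marg_singleton[of "a + k"] by (simp add: site_law_muL)
      with 2 show ?thesis by (simp add: A'_def)
    qed
  qed
qed

lemma no_LTI_extension:
  "\<not> (\<exists>\<nu>. measure_on {0..3} \<nu> \<and> LTI {0..3} \<nu> \<and> marg {0, 1, 3} \<nu> = muL)"
proof
  assume "\<exists>\<nu>. measure_on {0..3} \<nu> \<and> LTI {0..3} \<nu> \<and> marg {0, 1, 3} \<nu> = muL"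
  then obtain \<nu> where LTI: "LTI {0..3} \<nu>" and marg: "marg {0, 1, 3} \<nu> = muL" by blast
  have support: "\<eta> 0 = \<eta> 1 \<and> \<eta> 0 \<noteq> \<eta> 3" if "\<eta> \<in> set_pmf \<nu>" for \<eta>
  proof -
    have "restr {0, 1, 3} \<eta> \<in> set_pmf muL"
      using that marg by (metis imageI set_pmf_marg)
    then show ?thesis by (auto dest: muL_support simp: restr_def)
  qed
  have step: "\<eta> k = \<eta> (k + 1)" if \<eta>: "\<eta> \<in> set_pmf \<nu>" and k: "k \<in> {1, 2}" for \<eta> k
  proof -
    have "(\<lambda>i. i + k) ` {0, 1} \<subseteq> {0..3}" using k by auto
    moreover have "{0, 1} \<subseteq> {0..3::int}" by auto
    ultimately obtain \<eta>' where "\<eta>' \<in> set_pmf \<nu>" and \<eta>': "\<And>i. i \<in> {0, 1} \<Longrightarrow> \<eta> (i + k) = \<eta>' i"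
      using LTI_support_translate[OF LTI _ _ \<eta>] by blast
    then show ?thesis using support \<eta>'[of 0] \<eta>'[of 1] by (simp add: add.commute)
  qed
  obtain \<eta> where \<eta>: "\<eta> \<in> set_pmf \<nu>" by (meson ex_in_conv set_pmf_not_empty)
  with support[OF \<eta>] step[OF \<eta>, of 1] step[OF \<eta>, of 2] show False by auto
qed

lemma measurable_shift: "shift k \<in> prodZ \<rightarrow>\<^sub>M prodZ"
  unfolding prodZ_def shift_def
  by (rule measurable_PiM_single') (auto simp: space_PiM intro!: measurable_component_singleton)

lemma measurable_restr_0_1_3: "restr {0, 1, 3} \<in> prodZ \<rightarrow>\<^sub>M count_space UNIV"
proof -
  have "(\<lambda>\<eta>. (\<eta> 0, \<eta> 1, \<eta> 3)) \<in> prodZ \<rightarrow>\<^sub>M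
      count_space UNIV \<Otimes>\<^sub>M (count_space UNIV \<Otimes>\<^sub>M count_space UNIV)"
    unfolding prodZ_def by measurable
  then have "(\<lambda>\<eta>. (\<eta> 0, \<eta> 1, \<eta> 3)) \<in> prodZ \<rightarrow>\<^sub>M count_space (UNIV :: (bool \<times> bool \<times> bool) set)"
    by (simp add: pair_measure_countable)
  moreover have "restr {0, 1, 3} =
      (\<lambda>(a, b, c) i. (i = 0 \<and> a) \<or> (i = 1 \<and> b) \<or> (i = 3 \<and> c)) \<circ> (\<lambda>\<eta>. (\<eta> 0, \<eta> 1, \<eta> 3))"
    by (auto simp: restr_def fun_eq_iff)
  ultimately show ?thesis by simp
qed

lemma sets_prodZ_sites_eq: "{\<eta> \<in> space prodZ. \<eta> i = \<eta> j} \<in> sets prodZ"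
  unfolding prodZ_def by measurable

lemma AE_shift_invariant:
  assumes "distr M M (shift k) = M" "shift k \<in> M \<rightarrow>\<^sub>M M" "{\<eta> \<in> space M. P \<eta>} \<in> sets M"
    and "AE \<eta> in M. P \<eta>"
  shows "AE \<eta> in M. P (shift k \<eta>)"
proof -
  have "AE \<eta> in distr M M (shift k). P \<eta>" unfolding assms(1) by (rule assms(4))
  then show ?thesis using AE_distr_iff[OF assms(2,3)] by simp
qed

lemma no_invariant_measure_on_Z:
  "\<not> (\<exists>M. prob_space M \<and> sets M = sets prodZ
        \<and> (\<forall>k. distr M M (shift k) = M)
        \<and> distr M (count_space UNIV) (restr {0, 1, 3}) = measure_pmf muL)"
proof
  assume "\<exists>M. prob_space M \<and> sets M = sets prodZ
        \<and> (\<forall>k. distr M M (shift k) = M)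
        \<and> distr M (count_space UNIV) (restr {0, 1, 3}) = measure_pmf muL"
  then obtain M where "prob_space M" and sets_M: "sets M = sets prodZ"
    and invariant: "\<And>k. distr M M (shift k) = M"
    and marg: "distr M (count_space UNIV) (restr {0, 1, 3}) = measure_pmf muL" by blast
  have shift: "shift k \<in> M \<rightarrow>\<^sub>M M" for k
    using measurable_shift measurable_cong_sets[OF sets_M sets_M] by blast
  have sites_eq: "{\<eta> \<in> space M. \<eta> i = \<eta> j} \<in> sets M" for i j :: int
    using sets_prodZ_sites_eq sets_M sets_eq_imp_space_eq[OF sets_M] by simp
  have "AE \<eta> in measure_pmf muL. \<eta> 0 = \<eta> 1 \<and> \<eta> 0 \<noteq> \<eta> 3"
    unfolding AE_measure_pmf_iff using muL_support by blast
  then have "AE \<eta> in distr M (count_space UNIV) (restr {0, 1, 3}). \<eta> 0 = \<eta> 1 \<and> \<eta> 0 \<noteq> \<eta> 3"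
    unfolding marg .
  moreover have "restr {0, 1, 3} \<in> M \<rightarrow>\<^sub>M count_space UNIV"
    using measurable_restr_0_1_3 measurable_cong_sets[OF sets_M refl] by blast
  ultimately have "AE \<eta> in M. restr {0, 1, 3} \<eta> 0 = restr {0, 1, 3} \<eta> 1
      \<and> restr {0, 1, 3} \<eta> 0 \<noteq> restr {0, 1, 3} \<eta> 3"
    by (simp add: AE_distr_iff)
  then have AE_01_03: "AE \<eta> in M. \<eta> 0 = \<eta> 1 \<and> \<eta> 0 \<noteq> \<eta> 3"
    by (simp add: restr_def)
  have AE_step: "AE \<eta> in M. \<eta> k = \<eta> (k + 1)" for k
  proof -
    have "AE \<eta> in M. \<eta> 0 = \<eta> 1"
      using AE_01_03 by eventually_elim simp
    then have "AE \<eta> in M. shift (- k) \<eta> 0 = shift (- k) \<eta> 1"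
      by (rule AE_shift_invariant[OF invariant shift sites_eq])
    then show ?thesis by (simp add: shift_def add.commute)
  qed
  have "AE \<eta> in M. False"
    using AE_01_03 AE_step[of 1] AE_step[of 2] by eventually_elim auto
  with \<open>prob_space M\<close> show False by (simp add: prob_space.AE_False)
qed

theorem mainTheorem11:
  shows "measure_on {0, 1, 3} muL \<and> LTI {0, 1, 3} muL
    \<and> \<not> (\<exists>\<nu>. measure_on {0..3} \<nu> \<and> LTI {0..3} \<nu> \<and> marg {0, 1, 3} \<nu> = muL)
    \<and> \<not> (\<exists>M. prob_space M \<and> sets M = sets prodZ
            \<and> (\<forall>k. distr M M (shift k) = M)
            \<and> distr M (count_space UNIV) (restr {0, 1, 3}) = measure_pmf muL)"
  using measure_on_muL LTI_muL no_LTI_extension no_invariant_measure_on_Z by blast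

end
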